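(* Let $\mathcal{G}=\{G_1,\dots,G_M\}$ be groups, let $\vec z\in\mathbb{R}^p$ have support contained in $\bigcup_{i=1}^MG_i$, let $k\ge k^*$ be positive integers, and let $\widehat{\vec w}=P_k^{\mathcal{G}}(\vec z)$ and $\vec w^*=P_{k^*}^{\mathcal{G}}(\vec z)$. Then \[ \|\widehat{\vec w}-\vec z\|_2^2\le\frac{M-k}{M-k^*}\,\|\vec w^*-\vec z\|_2^2. \]
   Context: $\|\vec w\|_0^{\mathcal{G}}$ is the minimum number of nonzero terms in a decomposition $\vec w=\sum_i\vec a_{G_i}$ with $\operatorname{supp}(\vec a_{G_i})\subseteq G_i$. Exact projection: $P_k^{\mathcal{G}}(\vec z)=\arg\min_{\vec w}\|\vec w-\vec z\|_2^2$ subject to $\|\vec w\|_0^{\mathcal{G}}\le k$. *)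

theory Defs
  imports "HOL-Analysis.Analysis" "HOL-Library.Extended_Nat"
begin

definition vsupp :: "real ^ 'n \<Rightarrow> 'n set" where
  "vsupp x = {j. x $ j \<noteq> 0}"

definition group_l0 :: "(nat \<Rightarrow> 'n set) \<Rightarrow> nat \<Rightarrow> real ^ 'n \<Rightarrow> enat" where
  "group_l0 G M w = Inf {enat (card {i \<in> {1..M}. a i \<noteq> 0}) | a.
      (\<forall>i\<in>{1..M}. vsupp (a i) \<subseteq> G i) \<and> w = (\<Sum>i\<in>{1..M}. a i)}"

definition is_group_proj ::
  "(nat \<Rightarrow> 'n set) \<Rightarrow> nat \<Rightarrow> nat \<Rightarrow> real ^ 'n \<Rightarrow> real ^ 'n \<Rightarrow> bool" where
  "is_group_proj G M k z w \<longleftrightarrow>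
     group_l0 G M w \<le> enat k \<and>
     (\<forall>v. group_l0 G M v \<le> enat k \<longrightarrow> (norm (w - z))\<^sup>2 \<le> (norm (v - z))\<^sup>2)"

end

theory Submission
  imports Defs
begin

text \<open>Restricting z to the union of the groups indexed by T shows that the best error attainable
  with at most k groups is the least energy of z outside such a union, over sets T of at most k
  indices. Start from a set S realising the error of the k*-projection and add groups greedily.
  When m = M - |T| indices remain, these cover all energy of z still uncovered, so the best of them
  removes at least a fraction 1/m of it, multiplying the uncovered energy by (m - 1)/m. The product
  telescopes to (M - k)/(M - |S|), which is at most (M - k)/(M - k*).\<close>

definition uncovered_energy :: "(nat \<Rightarrow> 'n::finite set) \<Rightarrow> real ^ 'n \<Rightarrow> nat set \<Rightarrow> real" where
  "uncovered_energy G z T = (\<Sum>j \<in> - (\<Union>i\<in>T. G i). (z $ j)\<^sup>2)"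

lemma uncovered_energy_nonneg: "0 \<le> uncovered_energy G z T"
  unfolding uncovered_energy_def by (intro sum_nonneg) simp

lemma power2_norm_vec_eq_sum: "(norm (x :: real ^ 'n::finite))\<^sup>2 = (\<Sum>j\<in>UNIV. (x $ j)\<^sup>2)"
  unfolding power2_norm_eq_inner inner_vec_def by (simp add: power2_eq_square)

lemma group_l0_le_card:
  assumes "\<forall>i\<in>{1..M}. vsupp (a i) \<subseteq> G i"
  shows "group_l0 G M (\<Sum>i\<in>{1..M}. a i) \<le> enat (card {i \<in> {1..M}. a i \<noteq> 0})"
  unfolding group_l0_def using assms by (intro Inf_lower) blast

lemma group_l0_attained:
  assumes "group_l0 G M w \<le> enat k"
  obtains a where "\<forall>i\<in>{1..M}. vsupp (a i) \<subseteq> G i" "w = (\<Sum>i\<in>{1..M}. a i)"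
    and "card {i \<in> {1..M}. a i \<noteq> 0} \<le> k"
proof -
  define A where "A = {enat (card {i \<in> {1..M}. a i \<noteq> 0}) | a.
      (\<forall>i\<in>{1..M}. vsupp (a i) \<subseteq> G i) \<and> w = (\<Sum>i\<in>{1..M}. a i)}"
  have "A \<noteq> {}"
    using assms unfolding group_l0_def A_def[symmetric] Inf_enat_def by (auto split: if_splits)
  then have "Inf A \<in> A"
    unfolding Inf_enat_def by (auto intro: LeastI)
  with assms that show ?thesis
    unfolding group_l0_def A_def[symmetric] by (auto simp: A_def)
qed

lemma uncovered_energy_attained:
  fixes G :: "nat \<Rightarrow> 'n::finite set"
  assumes "T \<subseteq> {1..M}"
  obtains w where "group_l0 G M w \<le> enat (card T)" "(norm (w - z))\<^sup>2 = uncovered_energy G z T"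
proof -
  define V where "V = (\<Union>i\<in>T. G i)"
  define owner where "owner j = (SOME i. i \<in> T \<and> j \<in> G i)" for j
  have owner: "owner j \<in> T \<and> j \<in> G (owner j)" if "j \<in> V" for j
  proof -
    from that obtain i where "i \<in> T" "j \<in> G i"
      by (auto simp: V_def)
    then show ?thesis
      unfolding owner_def using someI[of "\<lambda>i. i \<in> T \<and> j \<in> G i"] by blast
  qed
  define a where "a i = (\<chi> j. if j \<in> V \<and> owner j = i then z $ j else 0)" for i
  define w :: "real ^ 'n" where "w = (\<chi> j. if j \<in> V then z $ j else 0)"
  have supp: "\<forall>i\<in>{1..M}. vsupp (a i) \<subseteq> G i"
    using owner by (auto simp: vsupp_def a_def)
  have "w $ j = (\<Sum>i\<in>{1..M}. a i) $ j" for j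
    using owner[of j] assms by (auto simp: w_def a_def sum_component sum.delta)
  then have w_sum: "w = (\<Sum>i\<in>{1..M}. a i)"
    by (simp add: vec_eq_iff)
  have "{i \<in> {1..M}. a i \<noteq> 0} \<subseteq> T"
    using owner by (auto simp: vec_eq_iff a_def split: if_splits)
  then have "card {i \<in> {1..M}. a i \<noteq> 0} \<le> card T"
    using finite_subset[OF assms] by (simp add: card_mono)
  with group_l0_le_card[OF supp] have "group_l0 G M w \<le> enat (card T)"
    unfolding w_sum by (meson enat_ord_simps(1) order_trans)
  moreover have "(norm (w - z))\<^sup>2 = uncovered_energy G z T"
    unfolding power2_norm_vec_eq_sum uncovered_energy_def V_def
    by (rule sum.mono_neutral_cong_right) (auto simp: w_def V_def)
  ultimately show ?thesis
    using that by blast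
qed

lemma uncovered_energy_le_dist:
  fixes G :: "nat \<Rightarrow> 'n::finite set"
  assumes "group_l0 G M w \<le> enat k"
  obtains S where "S \<subseteq> {1..M}" "card S \<le> k" "uncovered_energy G z S \<le> (norm (w - z))\<^sup>2"
proof -
  obtain a where a: "\<forall>i\<in>{1..M}. vsupp (a i) \<subseteq> G i" "w = (\<Sum>i\<in>{1..M}. a i)"
    and card: "card {i \<in> {1..M}. a i \<noteq> 0} \<le> k"
    using group_l0_attained[OF assms] .
  define S where "S = {i \<in> {1..M}. a i \<noteq> 0}"
  have "a i $ j = 0" if j: "j \<notin> (\<Union>i\<in>S. G i)" and i: "i \<in> {1..M}" for i j
  proof (cases "a i = 0")
    case False
    with i j have "j \<notin> G i"
      by (auto simp: S_def)
    with a(1) i show ?thesis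
      by (auto simp: vsupp_def)
  qed simp
  then have w_outside: "w $ j = 0" if "j \<notin> (\<Union>i\<in>S. G i)" for j
    using that by (simp add: a(2) sum_component)
  have "uncovered_energy G z S = (\<Sum>j \<in> - (\<Union>i\<in>S. G i). ((w - z) $ j)\<^sup>2)"
    unfolding uncovered_energy_def by (rule sum.cong) (auto simp: w_outside)
  also have "\<dots> \<le> (norm (w - z))\<^sup>2"
    unfolding power2_norm_vec_eq_sum by (rule sum_mono2) auto
  finally have "uncovered_energy G z S \<le> (norm (w - z))\<^sup>2" .
  moreover have "S \<subseteq> {1..M}"
    by (auto simp: S_def)
  ultimately show ?thesis
    using card[folded S_def] by (intro that)
qed

lemma uncovered_energy_insert:
  "uncovered_energy G z T
     = uncovered_energy G z (insert i T) + (\<Sum>j \<in> - (\<Union>i\<in>T. G i) \<inter> G i. (z $ j)\<^sup>2)"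
proof -
  have "- (\<Union>i\<in>insert i T. G i) = - (\<Union>i\<in>T. G i) - G i"
    by blast
  moreover have "uncovered_energy G z T = (\<Sum>j \<in> - (\<Union>i\<in>T. G i) \<inter> G i. (z $ j)\<^sup>2)
                   + (\<Sum>j \<in> - (\<Union>i\<in>T. G i) - G i. (z $ j)\<^sup>2)"
    unfolding uncovered_energy_def by (rule sum.Int_Diff) simp
  ultimately show ?thesis
    unfolding uncovered_energy_def by simp
qed

text \<open>The gain of adding group i is the energy of z on the part of G i left uncovered by T;
  since the groups cover the support of z, the gains of the groups outside T add up to at
  least everything T leaves uncovered.\<close>
lemma uncovered_energy_le_sum_gains:
  fixes G :: "nat \<Rightarrow> 'n::finite set"
  assumes cover: "vsupp z \<subseteq> (\<Union>i\<in>{1..M}. G i)"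
  shows "uncovered_energy G z T
           \<le> (\<Sum>i\<in>{1..M} - T. uncovered_energy G z T - uncovered_energy G z (insert i T))"
proof -
  define U where "U = - (\<Union>i\<in>T. G i)"
  have gain: "uncovered_energy G z T - uncovered_energy G z (insert i T)
                = (\<Sum>j\<in>U \<inter> G i. (z $ j)\<^sup>2)" for i
    using uncovered_energy_insert[of G z T i] by (simp add: U_def)
  have "(z $ j)\<^sup>2 \<le> (\<Sum>i\<in>{1..M} - T. if j \<in> G i then (z $ j)\<^sup>2 else 0)" if "j \<in> U" for j
  proof (cases "z $ j = 0")
    case False
    with cover obtain i where "i \<in> {1..M}" "j \<in> G i"
      by (auto simp: vsupp_def)
    with \<open>j \<in> U\<close> have "i \<in> {1..M} - T"
      by (auto simp: U_def)
    with \<open>j \<in> G i\<close> show ?thesis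
      using member_le_sum[of i "{1..M} - T" "\<lambda>i. if j \<in> G i then (z $ j)\<^sup>2 else 0"] by simp
  qed (simp add: sum_nonneg)
  then have "uncovered_energy G z T
               \<le> (\<Sum>j\<in>U. \<Sum>i\<in>{1..M} - T. if j \<in> G i then (z $ j)\<^sup>2 else 0)"
    unfolding uncovered_energy_def U_def[symmetric] by (rule sum_mono)
  also have "\<dots> = (\<Sum>i\<in>{1..M} - T. \<Sum>j\<in>U \<inter> G i. (z $ j)\<^sup>2)"
    by (subst sum.swap) (simp add: sum.inter_restrict)
  finally show ?thesis
    by (simp only: gain)
qed

lemma uncovered_energy_all_groups:
  fixes G :: "nat \<Rightarrow> 'n::finite set"
  assumes "vsupp z \<subseteq> (\<Union>i\<in>{1..M}. G i)"
  shows "uncovered_energy G z {1..M} = 0"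
proof (rule order_antisym)
  show "uncovered_energy G z {1..M} \<le> 0"
    using uncovered_energy_le_sum_gains[OF assms, of "{1..M}"] by simp
qed (rule uncovered_energy_nonneg)

lemma greedy_step:
  fixes G :: "nat \<Rightarrow> 'n::finite set"
  assumes cover: "vsupp z \<subseteq> (\<Union>i\<in>{1..M}. G i)" and "T \<subseteq> {1..M}" "card T < M"
  obtains i where "i \<in> {1..M} - T"
    "(real M - real (card T)) * uncovered_energy G z (insert i T)
       \<le> (real M - real (card T) - 1) * uncovered_energy G z T"
proof -
  define R where "R = {1..M} - T"
  define gain where "gain i = uncovered_energy G z T - uncovered_energy G z (insert i T)" for i
  have card_R: "real (card R) = real M - real (card T)"
    using assms(2,3) by (simp add: R_def card_Diff_subset finite_subset of_nat_diff)
  then have "R \<noteq> {}"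
    using assms(3) by auto
  then obtain i where "i \<in> R" and "Max (gain ` R) = gain i"
    using obtains_MAX[of R gain] by (auto simp: R_def)
  then have i_max: "\<forall>i'\<in>R. gain i' \<le> gain i"
    by (metis Max_ge R_def finite_Diff finite_atLeastAtMost finite_imageI imageI)
  have "uncovered_energy G z T \<le> (\<Sum>i\<in>R. gain i)"
    using uncovered_energy_le_sum_gains[OF cover] by (simp add: R_def gain_def)
  also have "\<dots> \<le> real (card R) * gain i"
    using sum_bounded_above[of R gain "gain i"] i_max by simp
  finally have "uncovered_energy G z T \<le> (real M - real (card T)) * gain i"
    unfolding card_R .
  then have "(real M - real (card T)) * uncovered_energy G z (insert i T)
               \<le> (real M - real (card T) - 1) * uncovered_energy G z T"
    unfolding gain_def by (simp add: algebra_simps)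
  with \<open>i \<in> R\<close> show ?thesis
    unfolding R_def by (rule that)
qed

lemma greedy_extension:
  fixes G :: "nat \<Rightarrow> 'n::finite set"
  assumes cover: "vsupp z \<subseteq> (\<Union>i\<in>{1..M}. G i)"
    and "S \<subseteq> {1..M}" "card S \<le> k" "k \<le> M"
  shows "\<exists>T. S \<subseteq> T \<and> T \<subseteq> {1..M} \<and> card T = k \<and>
           (real M - real (card S)) * uncovered_energy G z T
             \<le> (real M - real k) * uncovered_energy G z S"
  using assms(3,4)
proof (induction k rule: dec_induct)
  case base
  then show ?case
    using assms(2) by auto
next
  case (step k)
  then obtain T where T: "S \<subseteq> T" "T \<subseteq> {1..M}" "card T = k"
    and IH: "(real M - real (card S)) * uncovered_energy G z T
               \<le> (real M - real k) * uncovered_energy G z S"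
    by auto
  obtain i where i: "i \<in> {1..M} - T"
    and gain: "(real M - real k) * uncovered_energy G z (insert i T)
                 \<le> (real M - real k - 1) * uncovered_energy G z T"
    using greedy_step[OF cover T(2)] step.prems T(3) by auto
  define s where "s = real M - real (card S)"
  define m where "m = real M - real k"
  have "m \<ge> 1" "s \<ge> 0"
    using step.prems \<open>card S \<le> k\<close> by (auto simp: m_def s_def)
  have "m * (s * uncovered_energy G z (insert i T))
          = s * (m * uncovered_energy G z (insert i T))"
    by simp
  also have "\<dots> \<le> s * ((m - 1) * uncovered_energy G z T)"
    using gain \<open>s \<ge> 0\<close> by (simp add: m_def mult_left_mono)
  also have "\<dots> = (m - 1) * (s * uncovered_energy G z T)"
    by simp
  also have "\<dots> \<le> (m - 1) * (m * uncovered_energy G z S)"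
    using IH \<open>m \<ge> 1\<close> by (simp add: m_def s_def mult_left_mono)
  also have "\<dots> = m * ((m - 1) * uncovered_energy G z S)"
    by simp
  finally have "s * uncovered_energy G z (insert i T) \<le> (m - 1) * uncovered_energy G z S"
    using \<open>m \<ge> 1\<close> by (simp add: mult_le_cancel_left_pos)
  then have energy: "(real M - real (card S)) * uncovered_energy G z (insert i T)
                       \<le> (real M - real (Suc k)) * uncovered_energy G z S"
    by (simp add: m_def s_def algebra_simps)
  have card: "card (insert i T) = Suc k"
    using i T(2,3) finite_subset by fastforce
  have "S \<subseteq> insert i T" "insert i T \<subseteq> {1..M}"
    using T i by auto
  then show ?case
    by (intro exI[of _ "insert i T"] conjI energy card)
qed

theorem lemma6:
  fixes G :: "nat \<Rightarrow> 'n::finite set" and M k kstar :: nat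
    and z w_hat w_star :: "real ^ 'n"
  assumes "vsupp z \<subseteq> (\<Union>i\<in>{1..M}. G i)"
    and "1 \<le> kstar" and "kstar \<le> k" and "k \<le> M"
    and "is_group_proj G M k z w_hat"
    and "is_group_proj G M kstar z w_star"
  shows "(norm (w_hat - z))\<^sup>2
           \<le> (real M - real k) / (real M - real kstar) * (norm (w_star - z))\<^sup>2"
proof -
  obtain S where S: "S \<subseteq> {1..M}" "card S \<le> kstar"
    and S_energy: "uncovered_energy G z S \<le> (norm (w_star - z))\<^sup>2"
    using uncovered_energy_le_dist assms(6) unfolding is_group_proj_def by blast
  obtain T where T: "T \<subseteq> {1..M}" "card T = k"
    and T_energy: "(real M - real (card S)) * uncovered_energy G z T
                     \<le> (real M - real k) * uncovered_energy G z S"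
    using greedy_extension[OF assms(1) S(1)] S(2) assms(3,4) by (meson order_trans)
  obtain w where "group_l0 G M w \<le> enat k" "(norm (w - z))\<^sup>2 = uncovered_energy G z T"
    using uncovered_energy_attained[OF T(1)] T(2) by metis
  then have hat_energy: "(norm (w_hat - z))\<^sup>2 \<le> uncovered_energy G z T"
    using assms(5) unfolding is_group_proj_def by metis
  show ?thesis
  proof (cases "k = M")
    case True
    then have "T = {1..M}"
      using T by (intro card_subset_eq) auto
    then show ?thesis
      using hat_energy uncovered_energy_all_groups[OF assms(1)] True by simp
  next
    case False
    then have "uncovered_energy G z T
                 \<le> (real M - real k) / (real M - real (card S)) * uncovered_energy G z S"
      using T_energy S(2) assms(3,4) by (simp add: field_simps)
    also have "\<dots> \<le> (real M - real k) / (real M - real kstar) * (norm (w_star - z))\<^sup>2"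
      using S(2) S_energy assms(3,4) False uncovered_energy_nonneg[of G z S]
      by (intro mult_mono frac_le) auto
    finally show ?thesis
      using hat_energy by linarith
  qed
qed

end
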